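(* Let $\Omega\subset\mathbb{R}^2$ be open, connected and simply connected, with light-cone coordinates $(\xi_L,\xi_R)$, and let $f:\Omega\to\mathbb{C}^N\setminus\{0\}$ be a smooth solution of the Euler--Lagrange equations of the $\mathbb{C}P^{N-1}$ sigma model on Minkowski space, $$P\Big\{\partial_L\partial_R f-\frac{1}{f^\dagger f}\big((f^\dagger\partial_R f)\,\partial_L f+(f^\dagger\partial_L f)\,\partial_R f\big)\Big\}=0,\qquad P={\bf 1}-\frac{f\otimes f^\dagger}{f^\dagger f}.$$ Let $X:\Omega\to su(N)$ be the associated surface, i.e. $\partial_L X=[\partial_L P,P]$, $\partial_R X=-[\partial_R P,P]$. Then the induced metric $G_{BD}=(\partial_B X,\partial_D X)$, $B,D\in\{L,R\}$, is $$G_{LL}=J_L=\frac{\partial_L f^\dagger P\partial_L f}{f^\dagger f},\quad G_{RR}=J_R=\frac{\partial_R f^\dagger P\partial_R f}{f^\dagger f},\quad G_{LR}=-\Re\Big(\frac{\partial_R f^\dagger P\partial_L f}{f^\dagger f}\Big),$$ and the first fundamental form $I=J_L\,d\xi_L^2+2G_{LR}\,d\xi_L d\xi_R+J_R\,d\xi_R^2$ is positive semidefinite at every point of $\Omega$ ($J_L\ge 0$, $J_R\ge0$, $\det G\ge 0$). Moreover, $I$ is positive definite at a point $(\xi_L^0,\xi_R^0)\in\Omega$ if either $\Im\big(\partial_L f^\dagger P\partial_R f\big)(\xi_L^0,\xi_R^0)\neq 0$, or the vectors $\partial_L f(\xi_L^0,\xi_R^0)$, $\partial_R f(\xi_L^0,\xi_R^0)$,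 $f(\xi_L^0,\xi_R^0)$ are linearly independent over $\mathbb{C}$.
   Context: Minkowski metric $ds^2=(d\xi^1)^2-(d\xi^2)^2=d\xi_L\,d\xi_R$ with $\xi_L=\xi^1+\xi^2$, $\xi_R=\xi^1-\xi^2$, $\partial_L=\frac12(\partial_{\xi^1}+\partial_{\xi^2})$, $\partial_R=\frac12(\partial_{\xi^1}-\partial_{\xi^2})$. Vectors in $\mathbb{C}^N$ are columns, $f^\dagger$ is the conjugate transpose, and $f\otimes f^\dagger$ denotes the $N\times N$ matrix $ff^\dagger$. The algebra $su(N)$ is identified with the Euclidean space $\mathbb{R}^{N^2-1}$ via the scalar product $(A,B)=-\frac12\,\mathrm{tr}(AB)$. For a solution $f$ one has $\partial_L[\partial_R P,P]+\partial_R[\partial_L P,P]=0$, so an $su(N)$-valued function $X$ with $\partial_L X=[\partial_L P,P]$, $\partial_R X=-[\partial_R P,P]$ exists on $\Omega$ (unique up to an additive constant); its image is the surface associated with $f$. *)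

theory Defs
  imports "HOL-Analysis.Analysis"
begin

text \<open>Points of Omega are given in light-cone coordinates (xi_L, xi_R) :: real \<times> real.\<close>

definition dL :: "(real \<times> real \<Rightarrow> 'a::real_normed_vector) \<Rightarrow> real \<times> real \<Rightarrow> 'a" where
  "dL g p = vector_derivative (\<lambda>t. g (fst p + t, snd p)) (at 0)"

definition dR :: "(real \<times> real \<Rightarrow> 'a::real_normed_vector) \<Rightarrow> real \<times> real \<Rightarrow> 'a" where
  "dR g p = vector_derivative (\<lambda>t. g (fst p, snd p + t)) (at 0)"

fun iter_partial :: "bool list \<Rightarrow> (real \<times> real \<Rightarrow> 'a::real_normed_vector) \<Rightarrow> real \<times> real \<Rightarrow> 'a" where
  "iter_partial [] g = g"
| "iter_partial (b # bs) g = (if b then dL else dR) (iter_partial bs g)"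

text \<open>C-infinity on an open set: all iterated partial derivatives exist and are
  (Frechet) differentiable, hence continuous.\<close>
definition smooth_on :: "(real \<times> real) set \<Rightarrow> (real \<times> real \<Rightarrow> 'a::real_normed_vector) \<Rightarrow> bool" where
  "smooth_on \<Omega> g \<longleftrightarrow> (\<forall>bs. \<forall>p\<in>\<Omega>. iter_partial bs g differentiable (at p))"

definition cdot :: "complex^'n \<Rightarrow> complex^'n \<Rightarrow> complex" where
  "cdot u v = (\<Sum>i\<in>UNIV. cnj (u $ i) * v $ i)"

definition outer :: "complex^'n \<Rightarrow> complex^'n \<Rightarrow> complex^'n^'n" where
  "outer u v = (\<chi> i j. u $ i * cnj (v $ j))"

definition projP :: "complex^'n \<Rightarrow> complex^'n^'n" where
  "projP f = mat 1 - (\<chi> i j. outer f f $ i $ j / cdot f f)"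

definition comm :: "complex^'n^'n \<Rightarrow> complex^'n^'n \<Rightarrow> complex^'n^'n" where
  "comm A B = A ** B - B ** A"

definition su_mat :: "complex^'n^'n \<Rightarrow> bool" where
  "su_mat A \<longleftrightarrow> (\<forall>i j. A $ i $ j = - cnj (A $ j $ i)) \<and> trace A = 0"

text \<open>Scalar product (A,B) = -1/2 tr(AB) on su(N) (kept complex-valued; it is real on su(N)).\<close>
definition su_inner :: "complex^'n^'n \<Rightarrow> complex^'n^'n \<Rightarrow> complex" where
  "su_inner A B = - trace (A ** B) / 2"

definition lin_indep3 :: "complex^'n \<Rightarrow> complex^'n \<Rightarrow> complex^'n \<Rightarrow> bool" where
  "lin_indep3 u v w \<longleftrightarrow> (\<forall>a b c::complex. a *s u + b *s v + c *s w = 0 \<longrightarrow> a = 0 \<and> b = 0 \<and> c = 0)"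

end

theory Submission
  imports Defs
begin

(* At a point put x = f, v = d_L f, w = d_R f, and a = P v, c = - P w; both a and c are
   orthogonal to x.  Differentiating P = 1 - x x^+ / (x^+ x) and commuting with P gives
   [d P, P] = ((P dx) x^+ - x (P dx)^+) / (x^+ x), so d_L X and d_R X are the skew matrices
   built in this way from a and c.  A trace computation shows that the scalar product of two
   such matrices is Re (a^+ c) / (x^+ x), i.e. the real inner product of a and c in
   C^N = R^2N divided by |x|^2.  Hence the induced metric is a scaled Gram matrix of a and c:
   positive semidefinite by Cauchy-Schwarz, and definite unless a and c are real-linearly
   dependent, which either of the two extra conditions excludes.  The computation is pointwise. *)

lemma cnj_cdot: "cnj (cdot u v) = cdot v u"
  unfolding cdot_def by (simp add: mult.commute)

lemma Re_cdot: "Re (cdot u v) = u \<bullet> v"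
  unfolding cdot_def inner_vec_def inner_complex_def by simp

lemma cdot_self: "cdot z z = complex_of_real (z \<bullet> z)"
  by (simp add: complex_eq_iff Re_cdot) (simp add: cdot_def algebra_simps)

lemma cdot_self_eq_0_iff [simp]: "cdot z z = 0 \<longleftrightarrow> z = 0"
  by (simp add: cdot_self)

lemma cdot_diff_left: "cdot (u - v) w = cdot u w - cdot v w"
  unfolding cdot_def by (simp add: algebra_simps sum_subtractf)

lemma cdot_diff_right: "cdot u (v - w) = cdot u v - cdot u w"
  unfolding cdot_def by (simp add: algebra_simps sum_subtractf)

lemma cdot_smult_left: "cdot (c *s u) v = cnj c * cdot u v"
  unfolding cdot_def by (simp add: algebra_simps sum_distrib_left)

lemma cdot_smult_right: "cdot u (c *s v) = c * cdot u v"
  unfolding cdot_def by (simp add: algebra_simps sum_distrib_left)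

lemma cdot_scaleR_left: "cdot (r *\<^sub>R u) v = of_real r * cdot u v"
  unfolding cdot_def vector_scaleR_component
  by (simp add: scaleR_conv_of_real sum_distrib_left algebra_simps)

lemma cdot_minus_left [simp]: "cdot (- u) v = - cdot u v"
  unfolding cdot_def by (simp add: sum_negf)

lemma cdot_minus_right [simp]: "cdot u (- v) = - cdot u v"
  unfolding cdot_def by (simp add: sum_negf)

lemma cdot_0_right [simp]: "cdot u 0 = 0"
  by (simp add: cdot_def)

lemma projP_nth: "projP x $ i $ j = (if i = j then 1 else 0) - x$i * cnj (x$j) / cdot x x"
  unfolding projP_def by (simp add: mat_def outer_def)

lemma projP_mult_vec: "projP x *v v = v - (cdot x v / cdot x x) *s x"
proof -
  have "(projP x *v v) $ i = (\<Sum>j\<in>UNIV. (if i = j then v$j else 0) - x$i * (cnj (x$j) * v$j) / cdot x x)" for i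
    unfolding matrix_vector_mult_def projP_nth by (auto intro!: sum.cong simp: algebra_simps)
  then show ?thesis
    by (simp add: vec_eq_iff sum_subtractf sum_divide_distrib[symmetric]
        sum_distrib_left[symmetric] cdot_def)
qed

lemma cdot_projP_right_eq_0: "x \<noteq> 0 \<Longrightarrow> cdot x (projP x *v z) = 0"
  by (simp add: projP_mult_vec cdot_diff_right cdot_smult_right)

lemma cdot_projP_right: "x \<noteq> 0 \<Longrightarrow> cdot y (projP x *v z) = cdot (projP x *v y) (projP x *v z)"
  by (simp add: projP_mult_vec[of x y] cdot_diff_left cdot_smult_left cdot_projP_right_eq_0)

lemma matrix_mult_projP_nth:
  "(M ** projP x) $ i $ j = M$i$j - (M *v x)$i * cnj (x$j) / cdot x x"
proof -
  have "(M ** projP x) $ i $ j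
      = (\<Sum>k\<in>UNIV. (if k = j then M$i$k else 0) - M$i$k * x$k * cnj (x$j) / cdot x x)"
    unfolding matrix_matrix_mult_def projP_nth vec_lambda_beta
    by (rule sum.cong) (simp_all add: right_diff_distrib)
  then show ?thesis
    unfolding sum_subtractf sum_divide_distrib[symmetric] sum_distrib_right[symmetric]
    by (simp add: matrix_vector_mult_def)
qed

lemma projP_matrix_mult_nth:
  "(projP x ** M) $ i $ j = M$i$j - x$i * (\<Sum>k\<in>UNIV. cnj (x$k) * M$k$j) / cdot x x"
proof -
  have "(projP x ** M) $ i $ j
      = (\<Sum>k\<in>UNIV. (if i = k then M$k$j else 0) - x$i * (cnj (x$k) * M$k$j) / cdot x x)"
    unfolding matrix_matrix_mult_def projP_nth vec_lambda_beta
    by (rule sum.cong) (simp_all add: left_diff_distrib mult.assoc)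
  then show ?thesis
    unfolding sum_subtractf sum_divide_distrib[symmetric] sum_distrib_left[symmetric] by simp
qed

lemma has_vector_derivative_vec_nth:
  fixes g :: "real \<Rightarrow> 'a::real_normed_vector^'n"
  assumes "(g has_vector_derivative D) F"
  shows "((\<lambda>t. g t $ i) has_vector_derivative D $ i) F"
  using bounded_linear.has_vector_derivative[OF bounded_linear_vec_nth assms] .

lemma has_vector_derivative_vec:
  fixes g :: "real \<Rightarrow> 'a::real_normed_vector^'n"
  assumes "\<And>i. ((\<lambda>t. g t $ i) has_vector_derivative D $ i) F"
  shows "(g has_vector_derivative D) F"
proof -
  let ?t0 = "Lim F (\<lambda>t. t)"
  have "((\<lambda>t. ((g t - g ?t0) - (t - ?t0) *\<^sub>R D) /\<^sub>R norm (t - ?t0)) \<longlongrightarrow> 0) F"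
  proof (rule vec_tendstoI)
    fix i
    show "((\<lambda>t. (((g t - g ?t0) - (t - ?t0) *\<^sub>R D) /\<^sub>R norm (t - ?t0)) $ i) \<longlongrightarrow> 0 $ i) F"
      using assms[of i] unfolding has_vector_derivative_def has_derivative_def by simp
  qed
  then show ?thesis
    unfolding has_vector_derivative_def has_derivative_def by (simp add: bounded_linear_scaleR_left)
qed

lemma has_vector_derivative_inverse:
  fixes u :: "real \<Rightarrow> 'a::real_normed_field"
  assumes "(u has_vector_derivative u') (at t within S)" "u t \<noteq> 0"
  shows "((\<lambda>t. inverse (u t)) has_vector_derivative - (u' / (u t)\<^sup>2)) (at t within S)"
proof -
  have "((\<lambda>t. inverse (u t)) has_derivative (\<lambda>h. - (inverse (u t) * (h *\<^sub>R u') * inverse (u t))))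
      (at t within S)"
    using Deriv.has_derivative_inverse[OF assms(2) assms(1)[unfolded has_vector_derivative_def]] .
  moreover have "(\<lambda>h. - (inverse (u t) * (h *\<^sub>R u') * inverse (u t))) = (\<lambda>h. h *\<^sub>R (- (u' / (u t)\<^sup>2)))"
    using assms(2) by (auto simp: scaleR_conv_of_real field_simps power2_eq_square)
  ultimately show ?thesis by (simp add: has_vector_derivative_def)
qed

lemma has_vector_derivative_cdot_self:
  assumes "(\<gamma> has_vector_derivative v) (at t within S)"
  shows "((\<lambda>t. cdot (\<gamma> t) (\<gamma> t)) has_vector_derivative (cdot (\<gamma> t) v + cdot v (\<gamma> t))) (at t within S)"
proof -
  have "((\<lambda>t. \<Sum>k\<in>UNIV. cnj (\<gamma> t $ k) * \<gamma> t $ k) has_vector_derivative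
      (\<Sum>k\<in>UNIV. cnj (\<gamma> t $ k) * v $ k + cnj (v $ k) * \<gamma> t $ k)) (at t within S)"
    by (intro has_vector_derivative_sum has_vector_derivative_mult has_vector_derivative_cnj
        has_vector_derivative_vec_nth[OF assms])
  then show ?thesis by (simp add: cdot_def sum.distrib)
qed

definition projP_deriv :: "complex^'n \<Rightarrow> complex^'n \<Rightarrow> complex^'n^'n" where
  "projP_deriv x v = (\<chi> i j. - (v$i * cnj (x$j) + x$i * cnj (v$j)) / cdot x x
      + x$i * cnj (x$j) * (cdot v x + cdot x v) / (cdot x x)\<^sup>2)"

lemma has_vector_derivative_projP:
  assumes "(\<gamma> has_vector_derivative v) (at t within S)" "\<gamma> t \<noteq> 0"
  shows "((\<lambda>t. projP (\<gamma> t)) has_vector_derivative projP_deriv (\<gamma> t) v) (at t within S)"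
proof (intro has_vector_derivative_vec)
  fix i j
  have "((\<lambda>t. inverse (cdot (\<gamma> t) (\<gamma> t))) has_vector_derivative
      - ((cdot (\<gamma> t) v + cdot v (\<gamma> t)) / (cdot (\<gamma> t) (\<gamma> t))\<^sup>2)) (at t within S)"
    using assms by (intro has_vector_derivative_inverse has_vector_derivative_cdot_self) auto
  then have "((\<lambda>t. (if i = j then 1 else 0) - \<gamma> t $ i * cnj (\<gamma> t $ j) * inverse (cdot (\<gamma> t) (\<gamma> t)))
      has_vector_derivative projP_deriv (\<gamma> t) v $ i $ j) (at t within S)"
    by (auto intro!: derivative_eq_intros has_vector_derivative_vec_nth[OF assms(1)]
        simp: projP_deriv_def divide_inverse algebra_simps power2_eq_square)
  then show "((\<lambda>t. projP (\<gamma> t) $ i $ j) has_vector_derivative projP_deriv (\<gamma> t) v $ i $ j)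
      (at t within S)"
    by (simp add: projP_nth divide_inverse)
qed

lemma has_vector_derivative_dL:
  assumes "g differentiable (at p)"
  shows "((\<lambda>t. g (fst p + t, snd p)) has_vector_derivative dL g p) (at 0)"
proof -
  have "(\<lambda>t::real. (fst p + t, snd p)) differentiable (at 0)"
    unfolding differentiable_def by (auto intro!: derivative_eq_intros)
  from differentiable_chain_at[OF this, of g] assms
  have "(g \<circ> (\<lambda>t. (fst p + t, snd p))) differentiable (at 0)" by simp
  then show ?thesis
    unfolding dL_def by (simp add: o_def vector_derivative_works)
qed

lemma has_vector_derivative_dR:
  assumes "g differentiable (at p)"
  shows "((\<lambda>t. g (fst p, snd p + t)) has_vector_derivative dR g p) (at 0)"
proof -
  have "(\<lambda>t::real. (fst p, snd p + t)) differentiable (at 0)"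
    unfolding differentiable_def by (auto intro!: derivative_eq_intros)
  from differentiable_chain_at[OF this, of g] assms
  have "(g \<circ> (\<lambda>t. (fst p, snd p + t))) differentiable (at 0)" by simp
  then show ?thesis
    unfolding dR_def by (simp add: o_def vector_derivative_works)
qed

lemma dL_projP:
  assumes "g differentiable (at p)" "g p \<noteq> 0"
  shows "dL (\<lambda>q. projP (g q)) p = projP_deriv (g p) (dL g p)"
  using has_vector_derivative_projP[OF has_vector_derivative_dL[OF assms(1)]] assms(2)
  unfolding dL_def by (simp add: vector_derivative_at)

lemma dR_projP:
  assumes "g differentiable (at p)" "g p \<noteq> 0"
  shows "dR (\<lambda>q. projP (g q)) p = projP_deriv (g p) (dR g p)"
  using has_vector_derivative_projP[OF has_vector_derivative_dR[OF assms(1)]] assms(2)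
  unfolding dR_def by (simp add: vector_derivative_at)

lemma projP_deriv_mult_vec:
  assumes "x \<noteq> 0"
  shows "projP_deriv x v *v x = (cdot x v / cdot x x) *s x - v"
proof -
  let ?s = "cdot x x"
  have "(projP_deriv x v *v x) $ i
      = (\<Sum>k\<in>UNIV. cnj (x$k) * x$k * (x$i * (cdot v x + cdot x v) / ?s\<^sup>2 - v$i / ?s)
        - cnj (v$k) * x$k * (x$i / ?s))" for i
    unfolding matrix_vector_mult_def projP_deriv_def vec_lambda_beta divide_inverse
    by (intro sum.cong) (simp_all add: algebra_simps)
  also have "\<dots> i = ?s * (x$i * (cdot v x + cdot x v) / ?s\<^sup>2 - v$i / ?s) - cdot v x * (x$i / ?s)" for i
    unfolding sum_subtractf sum_distrib_right[symmetric] cdot_def ..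
  also have "\<dots> i = (cdot x v / ?s) * x$i - v$i" for i
    using assms by (simp add: field_simps power2_eq_square)
  finally show ?thesis by (simp add: vec_eq_iff)
qed

lemma sum_cnj_mult_projP_deriv:
  assumes "x \<noteq> 0"
  shows "(\<Sum>k\<in>UNIV. cnj (x$k) * projP_deriv x v $ k $ j) = cnj (x$j) * cdot v x / cdot x x - cnj (v$j)"
proof -
  let ?s = "cdot x x"
  have "(\<Sum>k\<in>UNIV. cnj (x$k) * projP_deriv x v $ k $ j)
      = (\<Sum>k\<in>UNIV. cnj (x$k) * x$k * (cnj (x$j) * (cdot v x + cdot x v) / ?s\<^sup>2 - cnj (v$j) / ?s)
        - cnj (x$k) * v$k * (cnj (x$j) / ?s))"
    unfolding projP_deriv_def vec_lambda_beta divide_inverse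
    by (intro sum.cong) (simp_all add: algebra_simps)
  also have "\<dots> = ?s * (cnj (x$j) * (cdot v x + cdot x v) / ?s\<^sup>2 - cnj (v$j) / ?s)
      - cdot x v * (cnj (x$j) / ?s)"
    unfolding sum_subtractf sum_distrib_right[symmetric] cdot_def ..
  also have "\<dots> = cnj (x$j) * cdot v x / ?s - cnj (v$j)"
    using assms by (simp add: field_simps power2_eq_square)
  finally show ?thesis .
qed

definition skew_outer :: "complex^'n \<Rightarrow> complex^'n \<Rightarrow> complex^'n^'n" where
  "skew_outer x a = (\<chi> i j. (a$i * cnj (x$j) - x$i * cnj (a$j)) / cdot x x)"

lemma skew_outer_uminus: "skew_outer x (- a) = - skew_outer x a"
  by (simp add: skew_outer_def vec_eq_iff minus_divide_left)

lemma comm_projP_deriv: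
  assumes "x \<noteq> 0"
  shows "comm (projP_deriv x v) (projP x) = skew_outer x (projP x *v v)"
proof -
  have "cnj (cdot x x) = cdot x x" "cnj (cdot x v) = cdot v x"
    by (simp_all add: cnj_cdot)
  then have "comm (projP_deriv x v) (projP x) $ i $ j = skew_outer x (projP x *v v) $ i $ j" for i j
    using assms
    by (simp add: comm_def matrix_mult_projP_nth projP_matrix_mult_nth projP_deriv_mult_vec
        sum_cnj_mult_projP_deriv skew_outer_def projP_mult_vec field_simps power2_eq_square)
  then show ?thesis by (simp add: vec_eq_iff)
qed

lemma trace_skew_outer_mult:
  "trace (skew_outer x a ** skew_outer x b) =
     (cdot x a * cdot x b - cdot b a * cdot x x - cdot x x * cdot a b + cdot b x * cdot a x) / (cdot x x)\<^sup>2"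
proof -
  define s where "s = cdot x x"
  have "trace (skew_outer x a ** skew_outer x b) = (\<Sum>i\<in>UNIV. \<Sum>k\<in>UNIV.
      ((cnj (x$i) * a$i) * (cnj (x$k) * b$k) - (cnj (b$i) * a$i) * (cnj (x$k) * x$k)
       - (cnj (x$i) * x$i) * (cnj (a$k) * b$k) + (cnj (b$i) * x$i) * (cnj (a$k) * x$k)) / s\<^sup>2)"
    unfolding trace_def matrix_matrix_mult_def skew_outer_def s_def[symmetric] vec_lambda_beta
      times_divide_times_eq power2_eq_square
    by (intro sum.cong refl arg_cong2[where f="(/)"]) (simp add: algebra_simps)
  also have "\<dots> = (cdot x a * cdot x b - cdot b a * s - s * cdot a b + cdot b x * cdot a x) / s\<^sup>2"
    unfolding sum_divide_distrib[symmetric] sum.distrib sum_subtractf sum_product[symmetric]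
    by (simp add: cdot_def s_def)
  finally show ?thesis by (simp add: s_def)
qed

lemma su_inner_skew_outer:
  assumes "x \<noteq> 0" "cdot x a = 0" "cdot x b = 0"
  shows "su_inner (skew_outer x a) (skew_outer x b) = complex_of_real (a \<bullet> b / (x \<bullet> x))"
proof -
  have "cdot a x = 0" "cdot b x = 0"
    using assms(2,3) cnj_cdot by (metis complex_cnj_zero)+
  then have "su_inner (skew_outer x a) (skew_outer x b) = (cdot a b + cnj (cdot a b)) / (2 * cdot x x)"
    using assms unfolding su_inner_def trace_skew_outer_mult cnj_cdot
    by (simp add: field_simps power2_eq_square)
  also have "\<dots> = complex_of_real (a \<bullet> b / (x \<bullet> x))"
    by (simp add: complex_add_cnj Re_cdot cdot_self)
  finally show ?thesis .
qed

lemma cdot_projP_self_div: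
  assumes "x \<noteq> 0"
  shows "cdot v (projP x *v v) / cdot x x = of_real ((projP x *v v) \<bullet> (projP x *v v) / (x \<bullet> x))"
  using assms by (simp add: cdot_projP_right[of x v v] cdot_self)

lemma Re_cdot_projP_div:
  assumes "x \<noteq> 0"
  shows "Re (cdot w (projP x *v v) / cdot x x) = (projP x *v w) \<bullet> (projP x *v v) / (x \<bullet> x)"
  using assms by (simp add: cdot_projP_right[of x w v] cdot_self Re_cdot)

lemma gram_quadratic_form:
  fixes a b :: "'a::real_inner"
  shows "\<alpha>\<^sup>2 * (a \<bullet> a / r) + 2 * \<alpha> * \<beta> * (a \<bullet> b / r) + \<beta>\<^sup>2 * (b \<bullet> b / r)
    = (norm (\<alpha> *\<^sub>R a + \<beta> *\<^sub>R b))\<^sup>2 / r"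
  unfolding power2_norm_eq_inner
  by (simp add: inner_add_left inner_add_right inner_commute[of b a]
      add_divide_distrib algebra_simps power2_eq_square)

lemma gram_determinant_nonneg:
  fixes a b :: "'a::real_inner"
  shows "(a \<bullet> b / r)\<^sup>2 \<le> (a \<bullet> a / r) * (b \<bullet> b / r)"
  using divide_right_mono[OF Cauchy_Schwarz_ineq[of a b], of "r\<^sup>2"]
  by (simp add: power_divide power2_eq_square)

lemma Im_cdot_eq_0_if_dependent:
  assumes "\<alpha> *\<^sub>R a + \<beta> *\<^sub>R b = 0" "(\<alpha>, \<beta>) \<noteq> (0, 0)"
  shows "Im (cdot a b) = 0"
proof (cases "\<alpha> = 0")
  case True
  then show ?thesis using assms by simp
next
  case False
  have "\<alpha> *\<^sub>R a = - (\<beta> *\<^sub>R b)"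
    using assms(1) by (simp add: eq_neg_iff_add_eq_0)
  then have "of_real \<alpha> * cdot a b = - (of_real \<beta> * cdot b b)"
    by (metis cdot_scaleR_left cdot_minus_left)
  from arg_cong[OF this, of Im] have "\<alpha> * Im (cdot a b) = 0"
    by (simp add: cdot_self)
  then show ?thesis using False by simp
qed

lemma projP_combination_eq_0_imp_not_lin_indep3:
  assumes "\<alpha> *\<^sub>R (projP x *v v) + \<beta> *\<^sub>R (projP x *v w) = 0" "(\<alpha>, \<beta>) \<noteq> (0, 0)"
  shows "\<not> lin_indep3 v w x"
proof
  assume "lin_indep3 v w x"
  moreover have "of_real \<alpha> *s v + of_real \<beta> *s w
      + (- of_real \<alpha> * (cdot x v / cdot x x) - of_real \<beta> * (cdot x w / cdot x x)) *s x = 0"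
    using assms(1) by (simp add: projP_mult_vec vec_eq_iff) (simp add: scaleR_conv_of_real algebra_simps)
  ultimately show False
    using assms(2) unfolding lin_indep3_def by fastforce
qed

lemma induced_metric_projP:
  assumes "x \<noteq> 0"
    and "A = skew_outer x (projP x *v v)" and "B = skew_outer x (- (projP x *v w))"
  shows "let JL = cdot v (projP x *v v) / cdot x x;
          JR = cdot w (projP x *v w) / cdot x x;
          GLL = su_inner A A;
          GRR = su_inner B B;
          GLR = su_inner A B;
          GRL = su_inner B A
      in GLL = JL \<and> GRR = JR
       \<and> GLR = complex_of_real (- Re (cdot w (projP x *v v) / cdot x x))
       \<and> GRL = GLR
       \<and> Re JL \<ge> 0 \<and> Re JR \<ge> 0 \<and> Re JL * Re JR - (Re GLR)\<^sup>2 \<ge> 0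
       \<and> (\<forall>a b::real. a\<^sup>2 * Re JL + 2 * a * b * Re GLR + b\<^sup>2 * Re JR \<ge> 0)
       \<and> ((Im (cdot v (projP x *v w)) \<noteq> 0 \<or> lin_indep3 v w x)
            \<longrightarrow> (\<forall>a b::real. (a, b) \<noteq> (0, 0) \<longrightarrow>
                   a\<^sup>2 * Re JL + 2 * a * b * Re GLR + b\<^sup>2 * Re JR > 0))"
proof -
  define a c r where "a = projP x *v v" and "c = - (projP x *v w)" and "r = x \<bullet> x"
  have "r > 0" using assms(1) by (simp add: r_def)
  have "cdot x a = 0" "cdot x c = 0"
    using assms(1) by (simp_all add: a_def c_def cdot_projP_right_eq_0)
  with assms have G: "su_inner A A = of_real (a \<bullet> a / r)" "su_inner B B = of_real (c \<bullet> c / r)"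
      "su_inner A B = of_real (a \<bullet> c / r)" "su_inner B A = of_real (a \<bullet> c / r)"
    by (simp_all add: su_inner_skew_outer a_def c_def r_def inner_commute)
  have J: "cdot v (projP x *v v) / cdot x x = of_real (a \<bullet> a / r)"
      "cdot w (projP x *v w) / cdot x x = of_real (c \<bullet> c / r)"
      "- Re (cdot w (projP x *v v) / cdot x x) = a \<bullet> c / r"
    using assms(1) by (simp_all add: cdot_projP_self_div Re_cdot_projP_div a_def c_def r_def inner_commute)
  have definite: "\<alpha> *\<^sub>R a + \<beta> *\<^sub>R c \<noteq> 0"
    if "Im (cdot v (projP x *v w)) \<noteq> 0 \<or> lin_indep3 v w x" "(\<alpha>, \<beta>) \<noteq> (0, 0)" for \<alpha> \<beta>
  proof
    assume "\<alpha> *\<^sub>R a + \<beta> *\<^sub>R c = 0"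
    then have dep: "\<alpha> *\<^sub>R a + (- \<beta>) *\<^sub>R (projP x *v w) = 0" and "(\<alpha>, - \<beta>) \<noteq> (0, 0)"
      using that(2) by (simp_all add: c_def)
    then have "Im (cdot a (projP x *v w)) = 0"
      by (rule Im_cdot_eq_0_if_dependent)
    moreover have "\<not> lin_indep3 v w x"
      using dep \<open>(\<alpha>, - \<beta>) \<noteq> (0, 0)\<close> unfolding a_def
      by (rule projP_combination_eq_0_imp_not_lin_indep3)
    ultimately show False
      using that(1) cdot_projP_right[OF assms(1), of v w] by (simp add: a_def)
  qed
  show ?thesis
    unfolding Let_def G J Re_complex_of_real gram_quadratic_form
    using gram_determinant_nonneg[of a c r] definite \<open>r > 0\<close>
    by (auto simp: divide_nonneg_pos)
qed

theorem mainTheorem1: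
  fixes \<Omega> :: "(real \<times> real) set"
    and f :: "real \<times> real \<Rightarrow> complex^'n"
    and X :: "real \<times> real \<Rightarrow> complex^'n^'n"
  assumes "open \<Omega>" and "connected \<Omega>" and "simply_connected \<Omega>"
    and "\<forall>p\<in>\<Omega>. f p \<noteq> 0"
    and "smooth_on \<Omega> f"
    and EL: "\<forall>p\<in>\<Omega>. projP (f p) *v
           (dL (dR f) p - (1 / cdot (f p) (f p)) *s
              (cdot (f p) (dR f p) *s dL f p + cdot (f p) (dL f p) *s dR f p)) = 0"
    and "\<forall>p\<in>\<Omega>. su_mat (X p)"
    and XL: "\<forall>p\<in>\<Omega>. ((\<lambda>t. X (fst p + t, snd p)) has_vector_derivative
                 comm (dL (\<lambda>q. projP (f q)) p) (projP (f p))) (at 0)"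
    and XR: "\<forall>p\<in>\<Omega>. ((\<lambda>t. X (fst p, snd p + t)) has_vector_derivative
                 - comm (dR (\<lambda>q. projP (f q)) p) (projP (f p))) (at 0)"
  shows "\<forall>p\<in>\<Omega>.
      let JL = cdot (dL f p) (projP (f p) *v dL f p) / cdot (f p) (f p);
          JR = cdot (dR f p) (projP (f p) *v dR f p) / cdot (f p) (f p);
          GLL = su_inner (dL X p) (dL X p);
          GRR = su_inner (dR X p) (dR X p);
          GLR = su_inner (dL X p) (dR X p);
          GRL = su_inner (dR X p) (dL X p)
      in GLL = JL \<and> GRR = JR
       \<and> GLR = complex_of_real (- Re (cdot (dR f p) (projP (f p) *v dL f p) / cdot (f p) (f p)))
       \<and> GRL = GLR
       \<and> Re JL \<ge> 0 \<and> Re JR \<ge> 0 \<and> Re JL * Re JR - (Re GLR)\<^sup>2 \<ge> 0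
       \<and> (\<forall>a b::real. a\<^sup>2 * Re JL + 2 * a * b * Re GLR + b\<^sup>2 * Re JR \<ge> 0)
       \<and> ((Im (cdot (dL f p) (projP (f p) *v dR f p)) \<noteq> 0
             \<or> lin_indep3 (dL f p) (dR f p) (f p))
            \<longrightarrow> (\<forall>a b::real. (a, b) \<noteq> (0, 0) \<longrightarrow>
                   a\<^sup>2 * Re JL + 2 * a * b * Re GLR + b\<^sup>2 * Re JR > 0))"
proof (intro ballI induced_metric_projP)
  fix p assume "p \<in> \<Omega>"
  show "f p \<noteq> 0" using assms(4) \<open>p \<in> \<Omega>\<close> by simp
  moreover have "f differentiable (at p)"
    using assms(5) \<open>p \<in> \<Omega>\<close> unfolding smooth_on_def by (metis iter_partial.simps(1))
  ultimately show "dL X p = skew_outer (f p) (projP (f p) *v dL f p)"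
    and "dR X p = skew_outer (f p) (- (projP (f p) *v dR f p))"
    using vector_derivative_at[OF XL[rule_format, OF \<open>p \<in> \<Omega>\<close>]]
      vector_derivative_at[OF XR[rule_format, OF \<open>p \<in> \<Omega>\<close>]]
    by (simp_all add: dL_def[symmetric] dR_def[symmetric] dL_projP dR_projP comm_projP_deriv
        skew_outer_uminus)
qed

end
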